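(* Let $m,n$ be positive integers, $r\le\min\{m,n\}$ a nonnegative integer and $a\in\{0,1,\dots,r\}$. If $Q(\lambda)$ is an $m\times n$ complex matrix pencil with $Q\in{\cal C}_a^r$ and normal rank of $Q$ equal to $r$, then (i) $\varepsilon(Q)\leq a$ and (ii) $\eta(Q)\leq r-a$.
   Context: A matrix pencil is $A+\lambda B$ with complex matrices $A,B$. The normal rank is the rank over $\mathbb{C}(\lambda)$. The degree of a vector polynomial is the maximum degree of its entries. ${\cal C}_a^r$ is the set of all $m\times n$ pencils $u_1(\lambda)v_1(\lambda)^T+\cdots+u_r(\lambda)v_r(\lambda)^T$ with $u_i\in\mathbb{C}[\lambda]^m$, $v_i\in\mathbb{C}[\lambda]^n$ of degree at most $1$, $\deg u_1=\cdots=\deg u_a=0$ and $\deg v_{a+1}=\cdots=\deg v_r=0$. In the Kronecker canonical form of $Q$, the right singular blocks $L_{\varepsilon_1},\dots,L_{\varepsilon_p}$ and left singular blocks $L_{\eta_1}^T,\dots,L_{\eta_q}^T$ (where $L_k$ is the $k\times(k+1)$ pencil with $\lambda$ at $(i,i)$ and $1$ at $(i,i+1)$) have orders called the right (column) and left (row) minimal indices of $Q$; $\varepsilon(Q)=\sum_i\varepsilon_i$ and $\eta(Q)=\sum_j\eta_j$ denote their sums. *)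

theory Defs
  imports "Jordan_Normal_Form.Jordan_Normal_Form" "Jordan_Normal_Form.DL_Rank"
          "HOL-Computational_Algebra.Fraction_Field"
begin

text \<open>A complex m x n pencil A + lambda B is represented by the pair of complex
  matrices (A, B).  Its associated matrix of polynomials in lambda:\<close>

definition pencil_poly :: "complex mat \<Rightarrow> complex mat \<Rightarrow> complex poly mat" where
  "pencil_poly A B = mat (dim_row A) (dim_col A) (\<lambda>(i,j). [: A $$ (i,j), B $$ (i,j) :])"

definition normal_rank :: "complex mat \<Rightarrow> complex mat \<Rightarrow> nat" where
  "normal_rank A B = vec_space.rank (dim_row A) (map_mat to_fract (pencil_poly A B))"

definition vdeg :: "complex poly vec \<Rightarrow> nat" where
  "vdeg u = Max (insert 0 {degree (u $ i) | i. i < dim_vec u})"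

text \<open>The set C_a^r of m x n pencils u_1 v_1^T + ... + u_r v_r^T with
  deg u_i, deg v_i at most 1, deg u_1 = ... = deg u_a = 0 and
  deg v_(a+1) = ... = deg v_r = 0 (vectors indexed 0..r-1 here).\<close>

definition in_C :: "nat \<Rightarrow> nat \<Rightarrow> nat \<Rightarrow> nat \<Rightarrow> complex mat \<Rightarrow> complex mat \<Rightarrow> bool" where
  "in_C m n a r A B \<longleftrightarrow>
     A \<in> carrier_mat m n \<and> B \<in> carrier_mat m n \<and>
     (\<exists>u v :: nat \<Rightarrow> complex poly vec.
        (\<forall>k<r. u k \<in> carrier_vec m \<and> v k \<in> carrier_vec n \<and>
               vdeg (u k) \<le> 1 \<and> vdeg (v k) \<le> 1) \<and>
        (\<forall>k<a. vdeg (u k) = 0) \<and>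
        (\<forall>k. a \<le> k \<and> k < r \<longrightarrow> vdeg (v k) = 0) \<and>
        pencil_poly A B = mat m n (\<lambda>(i,j). \<Sum>k<r. u k $ i * v k $ j))"

text \<open>Kronecker blocks, each given as a pencil (A-part, B-part).
  L_k is k x (k+1) with lambda at (i,i) and 1 at (i,i+1).\<close>

definition L_block :: "nat \<Rightarrow> complex mat \<times> complex mat" where
  "L_block k = (mat k (Suc k) (\<lambda>(i,j). if Suc i = j then 1 else 0),
                mat k (Suc k) (\<lambda>(i,j). if i = j then 1 else 0))"

definition LT_block :: "nat \<Rightarrow> complex mat \<times> complex mat" where
  "LT_block k = (transpose_mat (fst (L_block k)), transpose_mat (snd (L_block k)))"

definition fin_block :: "nat \<times> complex \<Rightarrow> complex mat \<times> complex mat" where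
  "fin_block km = (jordan_block (fst km) (snd km), 1\<^sub>m (fst km))"

definition inf_block :: "nat \<Rightarrow> complex mat \<times> complex mat" where
  "inf_block k = (1\<^sub>m k, jordan_block k 0)"

text \<open>Q = A + lambda B has Kronecker canonical form with right minimal indices
  eps, left minimal indices eta, finite Jordan blocks fin and infinite blocks inf:
  there are invertible constant P, R with P (A + lambda B) R equal to the block
  diagonal pencil.\<close>

definition kcf :: "complex mat \<Rightarrow> complex mat \<Rightarrow> nat list \<Rightarrow> nat list \<Rightarrow>
                   (nat \<times> complex) list \<Rightarrow> nat list \<Rightarrow> bool" where
  "kcf A B eps eta fin infb \<longleftrightarrow>
     (\<forall>p\<in>set fin. fst p > 0) \<and> (\<forall>k\<in>set infb. k > 0) \<and>
     (let blocks = map L_block eps @ map LT_block eta @ map fin_block fin @ map inf_block infb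
      in \<exists>P R. P \<in> carrier_mat (dim_row A) (dim_row A) \<and> R \<in> carrier_mat (dim_col A) (dim_col A) \<and>
               invertible_mat P \<and> invertible_mat R \<and>
               P * A * R = diag_block_mat (map fst blocks) \<and>
               P * B * R = diag_block_mat (map snd blocks))"

end

theory Submission
  imports Defs
begin

text \<open>
  A pencil \<open>Q\<close> in \<open>C\<^sub>a\<^sup>r\<close> factors as \<open>Q = W Z\<close> through dimension \<open>r\<close>, where the first \<open>a\<close>
  columns of \<open>W\<close> are constant and the others linear, and the first \<open>a\<close> rows of \<open>Z\<close> are linear
  and the others constant.  Hence, for constant \<open>C\<close> and \<open>D\<close>, Laplace expansion bounds the degree
  of an \<open>r \<times> r\<close> determinant \<open>det (C W)\<close> by \<open>r - a\<close> and that of \<open>det (Z D)\<close> by \<open>a\<close>.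

  In the Kronecker form \<open>K = P Q R\<close>, deleting the last column of \<open>L\<^sub>k\<close> leaves a bidiagonal minor
  \<open>\<lambda>\<^sup>k\<close>, deleting the first one leaves the minor \<open>1\<close> (dually for \<open>L\<^sub>k\<^sup>T\<close>), and the regular blocks
  are square with nonzero determinant.  Choosing the deletions blockwise gives constant \<open>E\<close>,
  \<open>F\<^sub>0\<close>, \<open>F\<^sub>1\<close> with \<open>det (E K F\<^sub>0) = G \<noteq> 0\<close> and \<open>det (E K F\<^sub>1) = \<lambda>\<^sup>\<epsilon> G\<close>.  The size of these
  minors is the normal rank \<open>r\<close>: \<open>K\<close> factors through it, and a nonzero minor cannot be larger
  than \<open>r\<close>.  So \<open>det (E K F) = det (E P W) det (Z R F)\<close>, and passing from \<open>F\<^sub>0\<close> to \<open>F\<^sub>1\<close>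
  multiplies \<open>det (Z R F)\<close> by \<open>\<lambda>\<^sup>\<epsilon>\<close>, whence \<open>\<epsilon> \<le> a\<close>; symmetrically \<open>\<eta> \<le> r - a\<close>.
\<close>

section \<open>Block matrices, determinants and rank\<close>

lemma sum_mult_delta:
  fixes f :: "nat \<Rightarrow> 'a::semiring_1"
  shows "j < n \<Longrightarrow> (\<Sum>l = 0..<n. f l * (if l = j then 1 else 0)) = f j"
  by (simp add: if_distrib[of "(*) _"] cong: if_cong)

lemma prod_list_map_power_mult:
  fixes c :: "'a::comm_monoid_mult"
  shows "prod_list (map (\<lambda>x. c ^ f x * g x) xs) = c ^ sum_list (map f xs) * prod_list (map g xs)"
  by (induction xs) (auto simp: power_add ac_simps)

lemma sum_indicator_lessThan:
  assumes "a \<le> r"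
  shows "(\<Sum>k<r. if k < a then 1 else 0 :: nat) = a" "(\<Sum>k<r. if k < a then 0 else 1 :: nat) = r - a"
proof -
  have "{..<r} \<inter> {k. k < a} = {..<a}" "{..<r} \<inter> - {k. k < a} = {a..<r}" using assms by auto
  then show "(\<Sum>k<r. if k < a then 1 else 0 :: nat) = a" "(\<Sum>k<r. if k < a then 0 else 1 :: nat) = r - a"
    by (simp_all add: sum.If_cases)
qed

lemma diag_block_mat_mult:
  fixes f g :: "'b \<Rightarrow> 'a::comm_ring_1 mat"
  assumes "\<And>x. x \<in> set xs \<Longrightarrow> dim_col (f x) = dim_row (g x)"
  shows "diag_block_mat (map f xs) * diag_block_mat (map g xs)
       = diag_block_mat (map (\<lambda>x. f x * g x) xs)"
  using assms
proof (induction xs)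
  case Nil
  then show ?case by (intro eq_matI) auto
next
  case (Cons x xs)
  let ?A = "f x" and ?B = "g x"
  let ?DA = "diag_block_mat (map f xs)" and ?DB = "diag_block_mat (map g xs)"
  have IH: "?DA * ?DB = diag_block_mat (map (\<lambda>x. f x * g x) xs)" using Cons by auto
  have d: "dim_col ?A = dim_row ?B" using Cons by auto
  have "map dim_col (map f xs) = map dim_row (map g xs)" using Cons.prems by simp
  then have "sum_list (map dim_col (map f xs)) = sum_list (map dim_row (map g xs))" by (rule arg_cong)
  then have dd: "dim_col ?DA = dim_row ?DB" by (simp add: dim_diag_block_mat)
  have "diag_block_mat (map f (x#xs)) * diag_block_mat (map g (x#xs)) =
     four_block_mat ?A (0\<^sub>m (dim_row ?A) (dim_col ?DA)) (0\<^sub>m (dim_row ?DA) (dim_col ?A)) ?DA *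
     four_block_mat ?B (0\<^sub>m (dim_row ?B) (dim_col ?DB)) (0\<^sub>m (dim_row ?DB) (dim_col ?B)) ?DB"
    by (simp add: Let_def)
  also have "\<dots> = four_block_mat (?A * ?B + 0\<^sub>m (dim_row ?A) (dim_col ?DA) * 0\<^sub>m (dim_row ?DB) (dim_col ?B))
        (?A * 0\<^sub>m (dim_row ?B) (dim_col ?DB) + 0\<^sub>m (dim_row ?A) (dim_col ?DA) * ?DB)
        (0\<^sub>m (dim_row ?DA) (dim_col ?A) * ?B + ?DA * 0\<^sub>m (dim_row ?DB) (dim_col ?B))
        (0\<^sub>m (dim_row ?DA) (dim_col ?A) * 0\<^sub>m (dim_row ?B) (dim_col ?DB) + ?DA * ?DB)"
    by (rule mult_four_block_mat[of _ _ "dim_col ?A" _ "dim_col ?DA" _ _ _ _ "dim_col ?B" _ "dim_col ?DB"])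
      (auto simp: d dd)
  also have "\<dots> = four_block_mat (?A * ?B) (0\<^sub>m (dim_row ?A) (dim_col ?DB))
                    (0\<^sub>m (dim_row ?DA) (dim_col ?B)) (?DA * ?DB)"
    by (intro cong_four_block_mat; rule eq_matI; simp add: d dd)
  also have "\<dots> = diag_block_mat (map (\<lambda>x. f x * g x) (x#xs))"
    by (simp add: Let_def IH[symmetric])
  finally show ?case .
qed

lemma det_diag_block_mat:
  fixes As :: "'a::idom mat list"
  assumes "\<And>A. A \<in> set As \<Longrightarrow> dim_row A = dim_col A"
  shows "det (diag_block_mat As) = prod_list (map det As)"
  using assms
proof (induction As)
  case Nil
  then show ?case by (simp add: det_dim_zero)
next
  case (Cons A As)
  let ?D = "diag_block_mat As"
  have "dim_row ?D = dim_col ?D" using diag_block_mat_square[of As] Cons.prems by auto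
  then have "det (diag_block_mat (A#As)) = det A * det ?D"
    using Cons.prems
    by (simp add: Let_def, intro det_four_block_mat_upper_right_zero[of _ "dim_row A" _ "dim_row ?D"]) auto
  then show ?case using Cons by auto
qed

lemma mult_mat_regroup:
  assumes "C \<in> carrier_mat p m" "X \<in> carrier_mat m t" "Y \<in> carrier_mat t q" "D \<in> carrier_mat q n"
  shows "C * (X * Y) * D = (C * X) * (Y * D)"
proof -
  have "C * (X * Y) * D = (C * X) * Y * D"
    using assms by (simp add: assoc_mult_mat[of C p m X t Y q])
  also have "\<dots> = (C * X) * (Y * D)"
    using assms by (intro assoc_mult_mat) auto
  finally show ?thesis .
qed

lemma det_mult_eq_0_if_inner_dim_less:
  fixes M N :: "'a::comm_ring_1 mat"
  assumes M: "M \<in> carrier_mat p r" and N: "N \<in> carrier_mat r p" and "r < p"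
  shows "det (M * N) = 0"
proof -
  define M0 where "M0 = mat p p (\<lambda>(i,j). if j < r then M $$ (i,j) else 0)"
  define N0 where "N0 = mat p p (\<lambda>(i,j). if i < r then N $$ (i,j) else 0)"
  have "M * N = M0 * N0"
  proof (rule eq_matI)
    fix i j assume i: "i < dim_row (M0 * N0)" and j: "j < dim_col (M0 * N0)"
    have "(M0 * N0) $$ (i,j) = (\<Sum>l\<in>{0..<p} \<inter> {l. l < r}. M $$ (i,l) * N $$ (l,j))"
      using i j unfolding M0_def N0_def
      by (simp add: scalar_prod_def sum.inter_restrict) (intro sum.cong, auto)
    also have "{0..<p} \<inter> {l. l < r} = {0..<r}" using \<open>r < p\<close> by auto
    finally show "(M * N) $$ (i,j) = (M0 * N0) $$ (i,j)"
      using i j M N unfolding M0_def N0_def by (simp add: scalar_prod_def)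
  qed (use M N in \<open>auto simp: M0_def N0_def\<close>)
  also have "det (M0 * N0) = det M0 * det N0"
    by (rule det_mult) (auto simp: M0_def N0_def)
  also have "det N0 = 0"
  proof -
    have "signof q * (\<Prod>i = 0..<p. N0 $$ (i, q i)) = 0" if q: "q permutes {0..<p}" for q
    proof -
      have "q r < p" using permutes_in_image[OF q] \<open>r < p\<close> by auto
      then have "N0 $$ (r, q r) = 0" using \<open>r < p\<close> unfolding N0_def by auto
      then have "(\<Prod>i = 0..<p. N0 $$ (i, q i)) = 0" using \<open>r < p\<close> by (intro prod_zero) auto
      then show ?thesis by simp
    qed
    moreover have "N0 \<in> carrier_mat p p" unfolding N0_def by auto
    ultimately show ?thesis by (simp add: det_def')
  qed
  finally show ?thesis by simp
qed

lemma dim_le_inner_dim_if_det_nonzero: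
  fixes E W Z F :: "'a::comm_ring_1 mat"
  assumes "E \<in> carrier_mat p m" "W \<in> carrier_mat m r" "Z \<in> carrier_mat r n" "F \<in> carrier_mat n p"
    and "det (E * (W * Z) * F) \<noteq> 0"
  shows "p \<le> r"
proof (rule ccontr)
  assume "\<not> p \<le> r"
  then have "det ((E * W) * (Z * F)) = 0"
    using assms by (intro det_mult_eq_0_if_inner_dim_less[of _ p r]) auto
  with assms show False by (simp add: mult_mat_regroup)
qed

lemma rank_mult_le_inner_dim:
  fixes A :: "'a::field mat"
  assumes A: "A \<in> carrier_mat nr t" and B: "B \<in> carrier_mat t nc"
  shows "vec_space.rank nr (A * B) \<le> t"
proof -
  define S where "S j = mat nr nc (\<lambda>(i,l). \<Sum>k<j. A $$ (i,k) * B $$ (k,l))" for j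
  have "vec_space.rank nr (S j) \<le> j" for j
  proof (induction j)
    case 0
    have "S 0 = 0\<^sub>m nr nc" unfolding S_def by (intro eq_matI) auto
    then show ?case using vec_space.rank_0I[of nr nc] by simp
  next
    case (Suc j)
    define R where "R = mat nr nc (\<lambda>(i,l). A $$ (i,j) * B $$ (j,l))"
    have "S (Suc j) = S j + R" unfolding S_def R_def by (intro eq_matI) auto
    moreover have "vec_space.rank nr R \<le> 1"
      by (rule vec_space.rank_le_1_product_entries[of R nr nc "\<lambda>i. A $$ (i,j)" "\<lambda>l. B $$ (j,l)"])
        (auto simp: R_def)
    moreover have "vec_space.rank nr (S j + R) \<le> vec_space.rank nr (S j) + vec_space.rank nr R"
      by (rule vec_space.rank_subadditive[of _ nr nc]) (auto simp: S_def R_def)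
    ultimately show ?case using Suc by simp
  qed
  moreover have "A * B = S t"
    unfolding S_def using A B by (intro eq_matI) (auto simp: scalar_prod_def lessThan_atLeast0)
  ultimately show ?thesis by simp
qed

lemma invertible_matE:
  assumes "invertible_mat P" and P: "P \<in> carrier_mat n n"
  obtains P' where "P' \<in> carrier_mat n n" "P' * P = 1\<^sub>m n" "P * P' = 1\<^sub>m n"
proof -
  from assms obtain P' where PP': "P * P' = 1\<^sub>m n" and P'P: "P' * P = 1\<^sub>m (dim_row P')"
    unfolding invertible_mat_def inverts_mat_def by auto
  have "dim_col P' = n" using arg_cong[OF PP', of dim_col] by simp
  moreover have "dim_row P' = n" using arg_cong[OF P'P, of dim_col] P by simp
  ultimately show ?thesis using that PP' P'P by auto
qed

section \<open>Polynomial matrices with bounded degrees\<close>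

definition const_mat :: "'a::zero poly mat \<Rightarrow> bool" where
  "const_mat M \<longleftrightarrow> (\<forall>x\<in>elements_mat M. degree x = 0)"

definition row_degrees_le :: "(nat \<Rightarrow> nat) \<Rightarrow> 'a::zero poly mat \<Rightarrow> bool" where
  "row_degrees_le d M \<longleftrightarrow> (\<forall>i<dim_row M. \<forall>j<dim_col M. degree (M $$ (i,j)) \<le> d i)"

definition col_degrees_le :: "(nat \<Rightarrow> nat) \<Rightarrow> 'a::zero poly mat \<Rightarrow> bool" where
  "col_degrees_le d M \<longleftrightarrow> (\<forall>i<dim_row M. \<forall>j<dim_col M. degree (M $$ (i,j)) \<le> d j)"

lemma const_matI:
  "(\<And>i j. i < dim_row M \<Longrightarrow> j < dim_col M \<Longrightarrow> degree (M $$ (i,j)) = 0) \<Longrightarrow> const_mat M"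
  unfolding const_mat_def by force

lemma const_matD:
  "const_mat M \<Longrightarrow> i < dim_row M \<Longrightarrow> j < dim_col M \<Longrightarrow> degree (M $$ (i,j)) = 0"
  unfolding const_mat_def by auto

lemma const_mat_diag_block_mat:
  "(\<And>M. M \<in> set Ms \<Longrightarrow> const_mat M) \<Longrightarrow> const_mat (diag_block_mat Ms)"
  using elements_diag_block_mat[of Ms] unfolding const_mat_def by fastforce

lemma col_degrees_le_iff_transpose: "col_degrees_le d M \<longleftrightarrow> row_degrees_le d (transpose_mat M)"
  unfolding col_degrees_le_def row_degrees_le_def by auto

lemma row_degrees_le_mult_const:
  fixes Z F :: "'a::comm_semiring_1 poly mat"
  assumes "row_degrees_le d Z" "const_mat F" "dim_col Z = dim_row F"
  shows "row_degrees_le d (Z * F)"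
  unfolding row_degrees_le_def
proof (intro allI impI)
  fix i k assume i: "i < dim_row (Z * F)" and k: "k < dim_col (Z * F)"
  have "degree (Z $$ (i,l) * F $$ (l,k)) \<le> d i" if l: "l < dim_row F" for l
  proof -
    have "degree (Z $$ (i,l) * F $$ (l,k)) \<le> degree (Z $$ (i,l)) + degree (F $$ (l,k))"
      by (rule degree_mult_le)
    also have "degree (F $$ (l,k)) = 0" using const_matD[OF assms(2)] k l by auto
    also have "degree (Z $$ (i,l)) \<le> d i"
      using assms(1,3) i l unfolding row_degrees_le_def by auto
    finally show ?thesis by simp
  qed
  moreover have "(Z * F) $$ (i,k) = (\<Sum>l<dim_row F. Z $$ (i,l) * F $$ (l,k))"
    using i k assms(3) by (simp add: scalar_prod_def atLeast0LessThan)
  ultimately show "degree ((Z * F) $$ (i,k)) \<le> d i"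
    by (auto intro: degree_sum_le)
qed

lemma col_degrees_le_const_mult:
  fixes E W :: "'a::comm_semiring_1 poly mat"
  assumes "const_mat E" "col_degrees_le d W" "dim_col E = dim_row W"
  shows "col_degrees_le d (E * W)"
proof -
  have "const_mat (transpose_mat E)"
    using const_matD[OF assms(1)] by (intro const_matI) auto
  then have "row_degrees_le d (transpose_mat W * transpose_mat E)"
    using assms(2,3) by (intro row_degrees_le_mult_const) (auto simp: col_degrees_le_iff_transpose)
  moreover have "transpose_mat (E * W) = transpose_mat W * transpose_mat E"
    using assms(3) by (intro transpose_mult[of E "dim_row E" "dim_col E" W "dim_col W"]) auto
  ultimately show ?thesis by (simp add: col_degrees_le_iff_transpose)
qed

lemma degree_det_le_row_degrees:
  fixes M :: "'a::comm_ring_1 poly mat"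
  assumes M: "M \<in> carrier_mat r r" and "row_degrees_le d M"
  shows "degree (det M) \<le> (\<Sum>i<r. d i)"
proof -
  have "degree (signof p * (\<Prod>i = 0..<r. M $$ (i, p i))) \<le> (\<Sum>i<r. d i)"
    if p: "p permutes {0..<r}" for p
  proof -
    have "degree (signof p * (\<Prod>i = 0..<r. M $$ (i, p i)))
          \<le> degree (signof p :: 'a poly) + degree (\<Prod>i = 0..<r. M $$ (i, p i))"
      by (rule degree_mult_le)
    also have "\<dots> = degree (\<Prod>i = 0..<r. M $$ (i, p i))" by simp
    also have "\<dots> \<le> (\<Sum>i = 0..<r. degree (M $$ (i, p i)))"
      using degree_prod_sum_le[of "{0..<r}" "\<lambda>i. M $$ (i, p i)"] by (simp add: o_def)
    also have "\<dots> \<le> (\<Sum>i = 0..<r. d i)"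
      using assms permutes_in_image[OF p] unfolding row_degrees_le_def by (intro sum_mono) auto
    finally show ?thesis by (simp add: atLeast0LessThan)
  qed
  then show ?thesis
    unfolding det_def'[OF M] by (intro degree_sum_le) (auto simp: finite_permutations)
qed

lemma degree_det_le_col_degrees:
  fixes M :: "'a::comm_ring_1 poly mat"
  assumes M: "M \<in> carrier_mat r r" and "col_degrees_le d M"
  shows "degree (det M) \<le> (\<Sum>j<r. d j)"
  using degree_det_le_row_degrees[of "transpose_mat M" r d] assms
  by (simp add: det_transpose col_degrees_le_iff_transpose)

lemma det_mult_through:
  fixes E W Z F :: "'a::comm_ring_1 mat"
  assumes "E \<in> carrier_mat r m" "W \<in> carrier_mat m r" "Z \<in> carrier_mat r n" "F \<in> carrier_mat n r"
  shows "det (E * (W * Z) * F) = det (E * W) * det (Z * F)"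
  using assms by (simp add: mult_mat_regroup[OF assms] det_mult[of _ r])

lemma exponent_le_row_degrees:
  fixes W Z E F0 F1 :: "'a::idom poly mat"
  assumes carriers: "W \<in> carrier_mat m r" "Z \<in> carrier_mat r n" "E \<in> carrier_mat r m"
      "F0 \<in> carrier_mat n r" "F1 \<in> carrier_mat n r"
    and "const_mat F1" "row_degrees_le d Z"
    and nz: "det (E * (W * Z) * F0) \<noteq> 0"
    and shift: "det (E * (W * Z) * F1) = [:0,1:] ^ e * det (E * (W * Z) * F0)"
  shows "e \<le> (\<Sum>i<r. d i)"
proof -
  have nzs: "det (E * W) \<noteq> 0" "det (Z * F0) \<noteq> 0"
    using nz det_mult_through[OF carriers(3,1,2,4)] by auto
  have "det (E * W) * det (Z * F1) = det (E * W) * ([:0,1:] ^ e * det (Z * F0))"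
    using shift det_mult_through[OF carriers(3,1,2,4)] det_mult_through[OF carriers(3,1,2,5)]
    by (simp add: ac_simps)
  then have "det (Z * F1) = [:0,1:] ^ e * det (Z * F0)" using nzs(1) by simp
  then have "e \<le> degree (det (Z * F1))"
    using nzs(2) by (simp add: degree_mult_eq degree_linear_power)
  also have "\<dots> \<le> (\<Sum>i<r. d i)"
    using carriers(2,5) assms(6,7)
    by (intro degree_det_le_row_degrees[of _ r] row_degrees_le_mult_const) auto
  finally show ?thesis .
qed

lemma exponent_le_col_degrees:
  fixes W Z E0 E1 F :: "'a::idom poly mat"
  assumes carriers: "W \<in> carrier_mat m r" "Z \<in> carrier_mat r n" "E0 \<in> carrier_mat r m"
      "E1 \<in> carrier_mat r m" "F \<in> carrier_mat n r"
    and "const_mat E1" "col_degrees_le d W"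
    and nz: "det (E0 * (W * Z) * F) \<noteq> 0"
    and shift: "det (E1 * (W * Z) * F) = [:0,1:] ^ e * det (E0 * (W * Z) * F)"
  shows "e \<le> (\<Sum>j<r. d j)"
proof -
  have nzs: "det (E0 * W) \<noteq> 0" "det (Z * F) \<noteq> 0"
    using nz det_mult_through[OF carriers(3,1,2,5)] by auto
  have "det (E1 * W) * det (Z * F) = ([:0,1:] ^ e * det (E0 * W)) * det (Z * F)"
    using shift det_mult_through[OF carriers(3,1,2,5)] det_mult_through[OF carriers(4,1,2,5)]
    by (simp add: ac_simps)
  then have "det (E1 * W) = [:0,1:] ^ e * det (E0 * W)" using nzs(2) by simp
  then have "e \<le> degree (det (E1 * W))"
    using nzs(1) by (simp add: degree_mult_eq degree_linear_power)
  also have "\<dots> \<le> (\<Sum>j<r. d j)"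
    using carriers(1,4) assms(6,7)
    by (intro degree_det_le_col_degrees[of _ r] col_degrees_le_const_mult) auto
  finally show ?thesis .
qed

section \<open>Pencils as polynomial matrices\<close>

interpretation const_poly_hom: comm_ring_hom "\<lambda>c::complex. [:c:]"
  by unfold_locales auto

interpretation to_fract_hom: comm_ring_hom "to_fract :: complex poly \<Rightarrow> complex poly fract"
  by unfold_locales auto

abbreviation const_poly_mat :: "complex mat \<Rightarrow> complex poly mat" where
  "const_poly_mat M \<equiv> map_mat (\<lambda>c. [:c:]) M"

lemma const_mat_const_poly_mat: "const_mat (const_poly_mat M)"
  by (rule const_matI) auto

lemma pencil_poly_index:
  "i < dim_row A \<Longrightarrow> j < dim_col A \<Longrightarrow> pencil_poly A B $$ (i,j) = [:A $$ (i,j), B $$ (i,j):]"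
  "dim_row (pencil_poly A B) = dim_row A" "dim_col (pencil_poly A B) = dim_col A"
  unfolding pencil_poly_def by auto

lemma pencil_poly_eq:
  "A \<in> carrier_mat m n \<Longrightarrow> B \<in> carrier_mat m n \<Longrightarrow>
   pencil_poly A B = const_poly_mat A + [:0,1:] \<cdot>\<^sub>m const_poly_mat B"
  unfolding pencil_poly_def by (intro eq_matI) auto

lemma pencil_poly_equiv:
  assumes A: "A \<in> carrier_mat m n" and B: "B \<in> carrier_mat m n"
    and P: "P \<in> carrier_mat m m" and R: "R \<in> carrier_mat n n"
  shows "pencil_poly (P * A * R) (P * B * R) = const_poly_mat P * pencil_poly A B * const_poly_mat R"
proof -
  let ?P = "const_poly_mat P" and ?R = "const_poly_mat R"
    and ?A = "const_poly_mat A" and ?B = "const_poly_mat B"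
  have c: "?A \<in> carrier_mat m n" "?B \<in> carrier_mat m n" "?P \<in> carrier_mat m m" "?R \<in> carrier_mat n n"
    using A B P R by auto
  have hom: "const_poly_mat (P * M * R) = ?P * const_poly_mat M * ?R" if M: "M \<in> carrier_mat m n" for M
    using const_poly_hom.mat_hom_mult[OF mult_carrier_mat[OF P M] R]
      const_poly_hom.mat_hom_mult[OF P M] by simp
  have "pencil_poly (P * A * R) (P * B * R)
      = const_poly_mat (P * A * R) + [:0,1:] \<cdot>\<^sub>m const_poly_mat (P * B * R)"
    using A B P R by (intro pencil_poly_eq) auto
  also have "\<dots> = ?P * ?A * ?R + [:0,1:] \<cdot>\<^sub>m (?P * ?B * ?R)"
    unfolding hom[OF A] hom[OF B] ..
  also have "[:0,1:] \<cdot>\<^sub>m (?P * ?B * ?R) = ?P * ([:0,1:] \<cdot>\<^sub>m ?B) * ?R"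
    using c by (simp add: mult_smult_distrib[of _ m m] mult_smult_assoc_mat[of _ m n])
  also have "?P * ?A * ?R + ?P * ([:0,1:] \<cdot>\<^sub>m ?B) * ?R = ?P * (?A + [:0,1:] \<cdot>\<^sub>m ?B) * ?R"
    using c by (simp add: add_mult_distrib_mat[of _ m n] mult_add_distrib_mat[of _ m m])
  finally show ?thesis using A B by (simp add: pencil_poly_eq)
qed

lemma pencil_poly_diag_block_mat:
  assumes "\<And>b. b \<in> set bs \<Longrightarrow> dim_row (fst b) = dim_row (snd b) \<and> dim_col (fst b) = dim_col (snd b)"
  shows "pencil_poly (diag_block_mat (map fst bs)) (diag_block_mat (map snd bs))
         = diag_block_mat (map (\<lambda>b. pencil_poly (fst b) (snd b)) bs)"
  using assms
proof (induction bs)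
  case Nil
  then show ?case by (intro eq_matI) (auto simp: pencil_poly_def)
next
  case (Cons b bs)
  obtain A1 A2 where b: "b = (A1,A2)" by force
  let ?D1 = "diag_block_mat (map fst bs)" and ?D2 = "diag_block_mat (map snd bs)"
  let ?D = "diag_block_mat (map (\<lambda>b. pencil_poly (fst b) (snd b)) bs)"
  have IH: "pencil_poly ?D1 ?D2 = ?D" using Cons by auto
  have dA: "dim_row A1 = dim_row A2" "dim_col A1 = dim_col A2" using Cons.prems b by auto
  have "(\<Sum>x\<leftarrow>bs. dim_row (fst x)) = (\<Sum>x\<leftarrow>bs. dim_row (snd x))"
    "(\<Sum>x\<leftarrow>bs. dim_col (fst x)) = (\<Sum>x\<leftarrow>bs. dim_col (snd x))"
    using Cons.prems by (intro arg_cong[where f=sum_list] map_cong; auto)+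
  then have dD: "dim_row ?D1 = dim_row ?D2" "dim_col ?D1 = dim_col ?D2"
    by (simp_all add: dim_diag_block_mat o_def)
  have dD': "dim_row ?D = dim_row ?D1" "dim_col ?D = dim_col ?D1"
    using IH[symmetric] by (simp_all add: pencil_poly_index)
  show ?case
  proof (rule eq_matI)
    fix i j
    assume "i < dim_row (diag_block_mat (map (\<lambda>b. pencil_poly (fst b) (snd b)) (b # bs)))"
      and "j < dim_col (diag_block_mat (map (\<lambda>b. pencil_poly (fst b) (snd b)) (b # bs)))"
    then have "i < dim_row A1 + dim_row ?D1" "j < dim_col A1 + dim_col ?D1"
      by (simp_all add: b Let_def pencil_poly_index dD')
    then show "pencil_poly (diag_block_mat (map fst (b # bs))) (diag_block_mat (map snd (b # bs))) $$ (i, j)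
        = diag_block_mat (map (\<lambda>b. pencil_poly (fst b) (snd b)) (b # bs)) $$ (i, j)"
      using IH[symmetric] dA dD dD' by (simp add: b Let_def pencil_poly_index del: IH)
  qed (simp_all add: b Let_def pencil_poly_index dD')
qed

lemma normal_rank_le_inner_dim:
  assumes "A \<in> carrier_mat m n" "pencil_poly A B = M * N"
    and "M \<in> carrier_mat m t" "N \<in> carrier_mat t n"
  shows "normal_rank A B \<le> t"
proof -
  have "map_mat to_fract (pencil_poly A B) = map_mat to_fract M * map_mat to_fract N"
    using assms by (simp add: to_fract_hom.mat_hom_mult)
  then show ?thesis
    using assms rank_mult_le_inner_dim[of "map_mat to_fract M" m t "map_mat to_fract N" n]
    by (simp add: normal_rank_def)
qed

lemma vdeg_ge: "i < dim_vec u \<Longrightarrow> degree (u $ i) \<le> vdeg u"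
  unfolding vdeg_def by (rule Max_ge) auto

lemma in_C_factorization:
  assumes "in_C m n a r A B"
  obtains W Z where "W \<in> carrier_mat m r" "Z \<in> carrier_mat r n"
    "col_degrees_le (\<lambda>k. if k < a then 0 else 1) W"
    "row_degrees_le (\<lambda>k. if k < a then 1 else 0) Z"
    "pencil_poly A B = W * Z"
proof -
  from assms obtain u v where uv: "\<forall>k<r. u k \<in> carrier_vec m \<and> v k \<in> carrier_vec n \<and>
               vdeg (u k) \<le> 1 \<and> vdeg (v k) \<le> 1"
    and ua: "\<forall>k<a. vdeg (u k) = 0" and va: "\<forall>k. a \<le> k \<and> k < r \<longrightarrow> vdeg (v k) = 0"
    and Q: "pencil_poly A B = mat m n (\<lambda>(i,j). \<Sum>k<r. u k $ i * v k $ j)"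
    unfolding in_C_def by blast
  define W where "W = mat m r (\<lambda>(i,k). u k $ i)"
  define Z where "Z = mat r n (\<lambda>(k,j). v k $ j)"
  have "degree (u k $ i) \<le> (if k < a then 0 else 1)" if "i < m" "k < r" for i k
    using that uv ua vdeg_ge[of i "u k"] by (auto split: if_splits)
  then have W: "col_degrees_le (\<lambda>k. if k < a then 0 else 1) W"
    unfolding col_degrees_le_def W_def by simp
  have "degree (v k $ j) \<le> (if k < a then 1 else 0)" if "j < n" "k < r" for j k
    using that uv va vdeg_ge[of j "v k"] by (auto split: if_splits)
  then have Z: "row_degrees_le (\<lambda>k. if k < a then 1 else 0) Z"
    unfolding row_degrees_le_def Z_def by simp
  have "pencil_poly A B = W * Z"
    unfolding Q W_def Z_def by (intro eq_matI) (auto simp: scalar_prod_def lessThan_atLeast0)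
  with W Z show ?thesis by (intro that) (auto simp: W_def Z_def)
qed

section \<open>Kronecker canonical form\<close>

datatype kcf_block = Right_block nat | Left_block nat | Finite_block "nat \<times> complex" | Infinite_block nat

fun block_pencil_pair :: "kcf_block \<Rightarrow> complex mat \<times> complex mat" where
  "block_pencil_pair (Right_block k) = L_block k"
| "block_pencil_pair (Left_block k) = LT_block k"
| "block_pencil_pair (Finite_block p) = fin_block p"
| "block_pencil_pair (Infinite_block k) = inf_block k"

fun block_rank :: "kcf_block \<Rightarrow> nat" where
  "block_rank (Right_block k) = k"
| "block_rank (Left_block k) = k"
| "block_rank (Finite_block p) = fst p"
| "block_rank (Infinite_block k) = k"

definition block_pencil :: "kcf_block \<Rightarrow> complex poly mat" where
  "block_pencil b = pencil_poly (fst (block_pencil_pair b)) (snd (block_pencil_pair b))"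

definition L_pencil :: "nat \<Rightarrow> complex poly mat" where
  "L_pencil k = mat k (Suc k) (\<lambda>(i,j). if Suc i = j then 1 else if i = j then [:0,1:] else 0)"

lemma block_pencil_pair_dims:
  "dim_row (fst (block_pencil_pair b)) = dim_row (snd (block_pencil_pair b))"
  "dim_col (fst (block_pencil_pair b)) = dim_col (snd (block_pencil_pair b))"
  by (cases b; simp add: L_block_def LT_block_def fin_block_def inf_block_def jordan_block_def)+

lemma block_pencil_simps:
  "block_pencil (Right_block k) = L_pencil k"
  "block_pencil (Left_block k) = transpose_mat (L_pencil k)"
  "block_pencil (Finite_block (k,\<mu>))
     = mat k k (\<lambda>(i,j). if i = j then [:\<mu>,1:] else if Suc i = j then 1 else 0)"
  "block_pencil (Infinite_block k)
     = mat k k (\<lambda>(i,j). if i = j then 1 else if Suc i = j then [:0,1:] else 0)"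
  unfolding block_pencil_def block_pencil_pair.simps pencil_poly_def L_pencil_def L_block_def LT_block_def
    fin_block_def inf_block_def jordan_block_def
  by (intro eq_matI; auto)+

definition del_last_col :: "nat \<Rightarrow> complex poly mat" where
  "del_last_col k = mat (Suc k) k (\<lambda>(i,j). if i = j then 1 else 0)"

definition del_first_col :: "nat \<Rightarrow> complex poly mat" where
  "del_first_col k = mat (Suc k) k (\<lambda>(i,j). if i = Suc j then 1 else 0)"

lemma det_L_pencil_del_last_col: "det (L_pencil k * del_last_col k) = [:0,1:] ^ k"
proof -
  have "L_pencil k * del_last_col k
      = mat k k (\<lambda>(i,j). if Suc i = j then 1 else if i = j then [:0,1:] else 0)"
    by (intro eq_matI) (auto simp: L_pencil_def del_last_col_def scalar_prod_def sum_mult_delta)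
  then show ?thesis
    by (subst det_upper_triangular[of _ k]) (auto simp: prod_list_diag_prod)
qed

lemma det_L_pencil_del_first_col: "det (L_pencil k * del_first_col k) = 1"
proof -
  have "L_pencil k * del_first_col k
      = mat k k (\<lambda>(i,j). if i = j then 1 else if i = Suc j then [:0,1:] else 0)"
    by (intro eq_matI) (auto simp: L_pencil_def del_first_col_def scalar_prod_def sum_mult_delta)
  then show ?thesis
    by (subst det_lower_triangular[of k]) (auto simp: prod_list_diag_prod)
qed

text \<open>Square minors of the blocks: the flag \<open>drop_last\<close> selects whether the last or the first
  column of \<open>L\<^sub>k\<close> (row of \<open>L\<^sub>k\<^sup>T\<close>) is deleted, leaving the minor \<open>\<lambda>\<^sup>k\<close> or \<open>1\<close>.\<close>

fun minor_rows :: "bool \<Rightarrow> kcf_block \<Rightarrow> complex poly mat" where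
  "minor_rows drop_last (Left_block k) = transpose_mat (if drop_last then del_last_col k else del_first_col k)"
| "minor_rows drop_last b = 1\<^sub>m (block_rank b)"

fun minor_cols :: "bool \<Rightarrow> kcf_block \<Rightarrow> complex poly mat" where
  "minor_cols drop_last (Right_block k) = (if drop_last then del_last_col k else del_first_col k)"
| "minor_cols drop_last b = 1\<^sub>m (block_rank b)"

fun minor_exponent :: "bool \<Rightarrow> bool \<Rightarrow> kcf_block \<Rightarrow> nat" where
  "minor_exponent drop_last_row drop_last_col (Right_block k) = (if drop_last_col then k else 0)"
| "minor_exponent drop_last_row drop_last_col (Left_block k) = (if drop_last_row then k else 0)"
| "minor_exponent drop_last_row drop_last_col b = 0"

fun block_minor_factor :: "kcf_block \<Rightarrow> complex poly" where
  "block_minor_factor (Finite_block p) = det (block_pencil (Finite_block p))"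
| "block_minor_factor b = 1"

lemma minor_dims:
  "dim_col (minor_rows drop_last_row b) = dim_row (block_pencil b)"
  "dim_row (minor_cols drop_last_col b) = dim_col (block_pencil b)"
  "dim_row (minor_rows drop_last_row b) = block_rank b"
  "dim_col (minor_cols drop_last_col b) = block_rank b"
  by (cases b; auto simp: block_pencil_simps L_pencil_def del_last_col_def del_first_col_def)+

lemma const_mat_minor_rows: "const_mat (minor_rows drop_last_row b)"
  by (cases b; rule const_matI; auto simp: del_last_col_def del_first_col_def)

lemma const_mat_minor_cols: "const_mat (minor_cols drop_last_col b)"
  by (cases b; rule const_matI; auto simp: del_last_col_def del_first_col_def)

lemma det_block_minor:
  "det (minor_rows drop_last_row b * block_pencil b * minor_cols drop_last_col b)
     = [:0,1:] ^ minor_exponent drop_last_row drop_last_col b * block_minor_factor b"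
proof (cases b)
  case (Right_block k)
  have "L_pencil k \<in> carrier_mat k (Suc k)" by (simp add: L_pencil_def)
  then show ?thesis
    by (simp add: Right_block block_pencil_simps det_L_pencil_del_last_col det_L_pencil_del_first_col)
next
  case (Left_block k)
  let ?S = "if drop_last_row then del_last_col k else del_first_col k"
  have c: "L_pencil k \<in> carrier_mat k (Suc k)" "?S \<in> carrier_mat (Suc k) k"
    by (auto simp: L_pencil_def del_last_col_def del_first_col_def)
  then have "minor_rows drop_last_row b * block_pencil b * minor_cols drop_last_col b
      = transpose_mat (L_pencil k * ?S)"
    by (simp add: Left_block block_pencil_simps transpose_mult[of _ k "Suc k"])
  then show ?thesis using c
    by (simp add: Left_block det_transpose[of _ k] det_L_pencil_del_last_col det_L_pencil_del_first_col)
next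
  case (Finite_block p)
  then show ?thesis by (cases p) (simp add: block_pencil_simps)
next
  case (Infinite_block k)
  have "det (block_pencil b) = 1"
    unfolding Infinite_block block_pencil_simps
    by (subst det_upper_triangular[of _ k]) (auto simp: prod_list_diag_prod)
  then show ?thesis by (simp add: Infinite_block block_pencil_simps)
qed

lemma block_minor_factor_nonzero: "block_minor_factor b \<noteq> 0"
proof (cases b)
  case (Finite_block p)
  obtain k \<mu> where p: "p = (k,\<mu>)" by force
  have "det (block_pencil b) = [:\<mu>,1:] ^ k"
    unfolding Finite_block p block_pencil_simps
    by (subst det_upper_triangular[of _ k]) (auto simp: prod_list_diag_prod)
  then show ?thesis by (simp add: Finite_block)
qed auto

lemma prod_list_block_minor_factor_nonzero: "prod_list (map block_minor_factor bs) \<noteq> 0"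
  using block_minor_factor_nonzero by (auto simp: prod_list_zero_iff)

fun block_left_factor :: "kcf_block \<Rightarrow> complex poly mat" where
  "block_left_factor (Right_block k) = 1\<^sub>m k"
| "block_left_factor b = block_pencil b"

fun block_right_factor :: "kcf_block \<Rightarrow> complex poly mat" where
  "block_right_factor (Right_block k) = block_pencil (Right_block k)"
| "block_right_factor b = 1\<^sub>m (block_rank b)"

lemma block_factorization:
  "block_left_factor b * block_right_factor b = block_pencil b"
  "dim_row (block_left_factor b) = dim_row (block_pencil b)"
  "dim_col (block_left_factor b) = block_rank b"
  "dim_row (block_right_factor b) = block_rank b"
  by (cases b; auto simp: block_pencil_simps L_pencil_def)+

definition kcf_blocks :: "nat list \<Rightarrow> nat list \<Rightarrow> (nat \<times> complex) list \<Rightarrow> nat list \<Rightarrow> kcf_block list" where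
  "kcf_blocks eps eta fin infb =
     map Right_block eps @ map Left_block eta @ map Finite_block fin @ map Infinite_block infb"

definition kcf_pencil :: "kcf_block list \<Rightarrow> complex poly mat" where
  "kcf_pencil bs = diag_block_mat (map block_pencil bs)"

definition kcf_rank :: "kcf_block list \<Rightarrow> nat" where
  "kcf_rank bs = sum_list (map block_rank bs)"

definition minor_rows_selector :: "bool \<Rightarrow> kcf_block list \<Rightarrow> complex poly mat" where
  "minor_rows_selector drop_last bs = diag_block_mat (map (minor_rows drop_last) bs)"

definition minor_cols_selector :: "bool \<Rightarrow> kcf_block list \<Rightarrow> complex poly mat" where
  "minor_cols_selector drop_last bs = diag_block_mat (map (minor_cols drop_last) bs)"

lemma minor_selector_carrier:
  "minor_rows_selector drop_last bs \<in> carrier_mat (kcf_rank bs) (dim_row (kcf_pencil bs))"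
  "minor_cols_selector drop_last bs \<in> carrier_mat (dim_col (kcf_pencil bs)) (kcf_rank bs)"
  unfolding minor_rows_selector_def minor_cols_selector_def kcf_pencil_def kcf_rank_def
  by (auto simp: dim_diag_block_mat o_def minor_dims)

lemma const_mat_minor_selector:
  "const_mat (minor_rows_selector drop_last bs)" "const_mat (minor_cols_selector drop_last bs)"
  unfolding minor_rows_selector_def minor_cols_selector_def
  by (auto intro!: const_mat_diag_block_mat simp: const_mat_minor_rows const_mat_minor_cols)

lemma det_kcf_minor:
  "det (minor_rows_selector drop_last_row bs * kcf_pencil bs * minor_cols_selector drop_last_col bs)
     = [:0,1:] ^ sum_list (map (minor_exponent drop_last_row drop_last_col) bs)
       * prod_list (map block_minor_factor bs)"
proof -
  have "minor_rows_selector drop_last_row bs * kcf_pencil bs * minor_cols_selector drop_last_col bs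
      = diag_block_mat (map (\<lambda>b. minor_rows drop_last_row b * block_pencil b * minor_cols drop_last_col b) bs)"
    unfolding minor_rows_selector_def minor_cols_selector_def kcf_pencil_def
    by (simp add: diag_block_mat_mult minor_dims)
  also have "det \<dots> = prod_list (map (\<lambda>b. [:0,1:] ^ minor_exponent drop_last_row drop_last_col b
                                           * block_minor_factor b) bs)"
    by (subst det_diag_block_mat) (auto simp: minor_dims o_def det_block_minor)
  finally show ?thesis by (simp add: prod_list_map_power_mult)
qed

lemma kcf_pencil_factorization:
  obtains X Y where "X \<in> carrier_mat (dim_row (kcf_pencil bs)) (kcf_rank bs)"
    "Y \<in> carrier_mat (kcf_rank bs) (dim_col (kcf_pencil bs))" "kcf_pencil bs = X * Y"
proof
  let ?X = "diag_block_mat (map block_left_factor bs)"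
  let ?Y = "diag_block_mat (map block_right_factor bs)"
  show XY: "kcf_pencil bs = ?X * ?Y"
    unfolding kcf_pencil_def by (simp add: diag_block_mat_mult block_factorization)
  show "?X \<in> carrier_mat (dim_row (kcf_pencil bs)) (kcf_rank bs)"
    unfolding kcf_pencil_def kcf_rank_def by (auto simp: dim_diag_block_mat o_def block_factorization)
  show "?Y \<in> carrier_mat (kcf_rank bs) (dim_col (kcf_pencil bs))"
    unfolding XY kcf_rank_def by (auto simp: dim_diag_block_mat o_def block_factorization)
qed

lemma kcf_equivalence:
  assumes "kcf A B eps eta fin infb" and A: "A \<in> carrier_mat m n" and B: "B \<in> carrier_mat m n"
  obtains P R P' R' where "P \<in> carrier_mat m m" "R \<in> carrier_mat n n"
    "P' \<in> carrier_mat m m" "R' \<in> carrier_mat n n"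
    "kcf_pencil (kcf_blocks eps eta fin infb) = const_poly_mat P * pencil_poly A B * const_poly_mat R"
    "pencil_poly A B = const_poly_mat P' * kcf_pencil (kcf_blocks eps eta fin infb) * const_poly_mat R'"
proof -
  let ?bs = "kcf_blocks eps eta fin infb"
  have "map L_block eps @ map LT_block eta @ map fin_block fin @ map inf_block infb
      = map block_pencil_pair ?bs"
    by (simp add: kcf_blocks_def o_def)
  with assms obtain P R where P: "P \<in> carrier_mat m m" and R: "R \<in> carrier_mat n n"
    and inv: "invertible_mat P" "invertible_mat R"
    and PAR: "P * A * R = diag_block_mat (map fst (map block_pencil_pair ?bs))"
    and PBR: "P * B * R = diag_block_mat (map snd (map block_pencil_pair ?bs))"
    unfolding kcf_def Let_def by auto
  obtain P' where P': "P' \<in> carrier_mat m m" "P' * P = 1\<^sub>m m" using invertible_matE[OF inv(1) P] .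
  obtain R' where R': "R' \<in> carrier_mat n n" "R * R' = 1\<^sub>m n" using invertible_matE[OF inv(2) R] .
  let ?P = "const_poly_mat P" and ?R = "const_poly_mat R"
    and ?P' = "const_poly_mat P'" and ?R' = "const_poly_mat R'" and ?Q = "pencil_poly A B"
  have K: "kcf_pencil ?bs = ?P * ?Q * ?R"
    unfolding pencil_poly_equiv[OF A B P R, symmetric] PAR PBR kcf_pencil_def
    by (subst pencil_poly_diag_block_mat) (auto simp: block_pencil_pair_dims block_pencil_def[abs_def] o_def)
  have PP': "?P' * ?P = 1\<^sub>m m" and RR': "?R * ?R' = 1\<^sub>m n"
    using P' R' P R by (simp_all add: const_poly_hom.mat_hom_mult[symmetric] const_poly_hom.mat_hom_one)
  have Q: "?Q \<in> carrier_mat m n" using A by (auto simp: pencil_poly_index)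
  have "(?Q * ?R) * ?R' = ?Q"
    using Q R R' by (simp add: assoc_mult_mat[of ?Q m n ?R n ?R' n] RR')
  moreover have "?P' * kcf_pencil ?bs * ?R' = (?P' * ?P) * ((?Q * ?R) * ?R')"
    unfolding K using Q P R P' R'
    by (simp add: assoc_mult_mat[of ?P m m ?Q n ?R n] mult_mat_regroup[of ?P' m m ?P m _ n ?R' n])
  ultimately have "?Q = ?P' * kcf_pencil ?bs * ?R'"
    using Q by (simp add: PP')
  with P R P' R' K show ?thesis by (intro that)
qed

lemma det_kcf_blocks_minor:
  fixes eps eta infb :: "nat list" and fin :: "(nat \<times> complex) list"
  defines "bs \<equiv> kcf_blocks eps eta fin infb"
  obtains G where "G \<noteq> 0"
    "\<And>drop_last_row drop_last_col.
       det (minor_rows_selector drop_last_row bs * kcf_pencil bs * minor_cols_selector drop_last_col bs)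
       = [:0,1:] ^ ((if drop_last_col then sum_list eps else 0) + (if drop_last_row then sum_list eta else 0)) * G"
proof
  show "prod_list (map block_minor_factor bs) \<noteq> 0"
    by (rule prod_list_block_minor_factor_nonzero)
  show "det (minor_rows_selector drop_last_row bs * kcf_pencil bs * minor_cols_selector drop_last_col bs)
      = [:0,1:] ^ ((if drop_last_col then sum_list eps else 0) + (if drop_last_row then sum_list eta else 0))
        * prod_list (map block_minor_factor bs)" for drop_last_row drop_last_col
    unfolding det_kcf_minor
    by (cases drop_last_row; cases drop_last_col) (simp_all add: bs_def kcf_blocks_def o_def)
qed

lemma kcf_rank_le_inner_dim:
  assumes K: "kcf_pencil bs = W * Z" and W: "W \<in> carrier_mat (dim_row (kcf_pencil bs)) r"
    and Z: "Z \<in> carrier_mat r (dim_col (kcf_pencil bs))"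
  shows "kcf_rank bs \<le> r"
proof -
  have "det (minor_rows_selector False bs * (W * Z) * minor_cols_selector False bs) \<noteq> 0"
    using det_kcf_minor[of False bs False] prod_list_block_minor_factor_nonzero[of bs]
    by (simp add: K[symmetric])
  from dim_le_inner_dim_if_det_nonzero[OF minor_selector_carrier(1) W Z minor_selector_carrier(2) this]
  show ?thesis .
qed

lemma normal_rank_le_kcf_rank:
  assumes "kcf A B eps eta fin infb" "A \<in> carrier_mat m n" "B \<in> carrier_mat m n"
  shows "normal_rank A B \<le> kcf_rank (kcf_blocks eps eta fin infb)"
proof -
  let ?bs = "kcf_blocks eps eta fin infb"
  obtain P R P' R' where PR: "P \<in> carrier_mat m m" "R \<in> carrier_mat n n"
      "P' \<in> carrier_mat m m" "R' \<in> carrier_mat n n"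
    and K: "kcf_pencil ?bs = const_poly_mat P * pencil_poly A B * const_poly_mat R"
    and Q: "pencil_poly A B = const_poly_mat P' * kcf_pencil ?bs * const_poly_mat R'"
    using kcf_equivalence[OF assms] .
  obtain X Y where X: "X \<in> carrier_mat (dim_row (kcf_pencil ?bs)) (kcf_rank ?bs)"
    and Y: "Y \<in> carrier_mat (kcf_rank ?bs) (dim_col (kcf_pencil ?bs))" and KXY: "kcf_pencil ?bs = X * Y"
    using kcf_pencil_factorization .
  have "pencil_poly A B \<in> carrier_mat m n" using assms(2) by (auto simp: pencil_poly_index)
  then have "kcf_pencil ?bs \<in> carrier_mat m n" unfolding K using PR by auto
  then have X': "X \<in> carrier_mat m (kcf_rank ?bs)" and Y': "Y \<in> carrier_mat (kcf_rank ?bs) n"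
    using X Y by auto
  have "pencil_poly A B = (const_poly_mat P' * X) * (Y * const_poly_mat R')"
    unfolding Q KXY using PR by (intro mult_mat_regroup[OF _ X' Y']) auto
  from normal_rank_le_inner_dim[OF assms(2) this] show ?thesis using PR X' Y' by auto
qed

lemma kcf_pencil_in_C_factorization:
  assumes "kcf A B eps eta fin infb" "A \<in> carrier_mat m n" "B \<in> carrier_mat m n" "in_C m n a r A B"
  obtains W Z where "W \<in> carrier_mat m r" "Z \<in> carrier_mat r n"
    "col_degrees_le (\<lambda>k. if k < a then 0 else 1) W"
    "row_degrees_le (\<lambda>k. if k < a then 1 else 0) Z"
    "kcf_pencil (kcf_blocks eps eta fin infb) = W * Z"
proof -
  obtain P R where PR: "P \<in> carrier_mat m m" "R \<in> carrier_mat n n"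
    and K: "kcf_pencil (kcf_blocks eps eta fin infb) = const_poly_mat P * pencil_poly A B * const_poly_mat R"
    using kcf_equivalence[OF assms(1-3)] .
  obtain W Z where WZ: "W \<in> carrier_mat m r" "Z \<in> carrier_mat r n"
    and deg: "col_degrees_le (\<lambda>k. if k < a then 0 else 1) W" "row_degrees_le (\<lambda>k. if k < a then 1 else 0) Z"
    and QWZ: "pencil_poly A B = W * Z"
    using in_C_factorization[OF assms(4)] .
  show ?thesis
  proof
    show "kcf_pencil (kcf_blocks eps eta fin infb) = (const_poly_mat P * W) * (Z * const_poly_mat R)"
      unfolding K QWZ using PR WZ by (intro mult_mat_regroup) auto
  qed (use PR WZ deg in \<open>auto intro: col_degrees_le_const_mult row_degrees_le_mult_const const_mat_const_poly_mat\<close>)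
qed

theorem lemma3p3:
  fixes m n r a :: nat and A B :: "complex mat"
  assumes "m > 0" "n > 0" "r \<le> min m n" "a \<le> r"
    and "A \<in> carrier_mat m n" "B \<in> carrier_mat m n"
    and "in_C m n a r A B"
    and "normal_rank A B = r"
  shows "\<forall>eps eta fin infb. kcf A B eps eta fin infb \<longrightarrow> sum_list eps \<le> a \<and> sum_list eta \<le> r - a"
proof (intro allI impI)
  fix eps eta fin infb
  assume kcf: "kcf A B eps eta fin infb"
  define bs where "bs = kcf_blocks eps eta fin infb"
  obtain W Z where WZ: "W \<in> carrier_mat m r" "Z \<in> carrier_mat r n"
    and deg: "col_degrees_le (\<lambda>k. if k < a then 0 else 1) W" "row_degrees_le (\<lambda>k. if k < a then 1 else 0) Z"
    and KWZ: "kcf_pencil bs = W * Z"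
    using kcf_pencil_in_C_factorization[OF kcf assms(5-7)] unfolding bs_def .
  have "r \<le> kcf_rank bs"
    using normal_rank_le_kcf_rank[OF kcf assms(5,6)] assms(8) unfolding bs_def by simp
  moreover have "kcf_rank bs \<le> r"
    using WZ by (intro kcf_rank_le_inner_dim[OF KWZ]) (auto simp: KWZ)
  ultimately have "kcf_rank bs = r" by simp
  then have selectors: "minor_rows_selector drop_last bs \<in> carrier_mat r m"
    "minor_cols_selector drop_last bs \<in> carrier_mat n r" for drop_last
    using minor_selector_carrier[of _ bs] WZ unfolding KWZ by auto
  obtain G where "G \<noteq> 0" and minor: "\<And>drop_last_row drop_last_col.
      det (minor_rows_selector drop_last_row bs * (W * Z) * minor_cols_selector drop_last_col bs)
      = [:0,1:] ^ ((if drop_last_col then sum_list eps else 0) + (if drop_last_row then sum_list eta else 0)) * G"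
    using det_kcf_blocks_minor[of eps eta fin infb] unfolding bs_def[symmetric] KWZ by blast
  have "sum_list eps \<le> (\<Sum>k<r. if k < a then 1 else 0)"
    using minor[of False True] minor[of False False] \<open>G \<noteq> 0\<close> selectors WZ deg const_mat_minor_selector
    by (intro exponent_le_row_degrees[of W m r Z n "minor_rows_selector False bs"
        "minor_cols_selector False bs" "minor_cols_selector True bs"]) auto
  moreover have "sum_list eta \<le> (\<Sum>k<r. if k < a then 0 else 1)"
    using minor[of True False] minor[of False False] \<open>G \<noteq> 0\<close> selectors WZ deg const_mat_minor_selector
    by (intro exponent_le_col_degrees[of W m r Z n "minor_rows_selector False bs"
        "minor_rows_selector True bs" "minor_cols_selector False bs"]) auto
  ultimately show "sum_list eps \<le> a \<and> sum_list eta \<le> r - a"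
    using sum_indicator_lessThan[OF assms(4)] by simp
qed

end
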